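(* Let $(C,D)$ define an irreducible MAP of order $p$ which is either an MMPP ($D$ diagonal) or an MSPP ($C$ diagonal). Then its limiting index of dispersion of counts satisfies $d^2\ge 1$; equivalently, $$\boldsymbol{\pi} D D_Q^{\sharp} D\mathbf{1}\ \ge\ 0,$$ where $D_Q^{\sharp}=\int_0^\infty (e^{Qu}-\mathbf{1}\boldsymbol{\pi})\,du$ is the deviation matrix of $Q=C+D$.
   Context: A Markovian arrival process (MAP) of order $p$ is specified by $p\times p$ real matrices $C$ and $D$ such that $D$ has nonnegative entries, $C$ has nonnegative off-diagonal entries, and $Q=C+D$ is the generator (row sums zero) of an irreducible continuous-time Markov chain on $\{1,\dots,p\}$; $C$ is assumed nonsingular. $C$ governs phase transitions without events and $D$ phase transitions accompanied by an event; $N(t)$ counts events in $[0,t]$. $\boldsymbol{\pi}$ is the stationary distribution of $Q$ ($\boldsymbol{\pi}Q=\mathbf{0}$, $\boldsymbol{\pi}\mathbf{1}=1$), $\mathbf{1}$ the all-ones column vector, and $\lambda^*=\boldsymbol{\pi}D\mathbf{1}$. Starting the phase at $\boldsymbol{\pi}$ gives the time-stationary version. The limiting index of dispersion is $d^2=\lim_{t\to\infty}\mathrm{Var}(N(t))/\mathbb{E}[N(t)]$ for the time-stationary version, and it equals $1+\frac{2}{\lambda^*}\boldsymbol{\pi}DD_Q^{\sharp}D\mathbf{1}$. An MMPP (Markov modulated Poisson process) is a MAP with $D$ diagonal; an MSPP (Markovian switched Poisson process) is a MAP with $C$ diagonal. *)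

theory Defs
  imports "HOL-Analysis.Analysis"
begin

text \<open>Matrix powers and the matrix exponential on real square matrices
  (matrix product, not the componentwise product of the vec type).\<close>

fun mpow :: "real^'n^'n \<Rightarrow> nat \<Rightarrow> real^'n^'n" where
  "mpow A 0 = mat 1"
| "mpow A (Suc k) = A ** mpow A k"

definition mexp :: "real^'n^'n \<Rightarrow> real^'n^'n" where
  "mexp A = (\<Sum>k. (1 / fact k) *\<^sub>R mpow A k)"

definition ones :: "real^'n" where
  "ones = (\<chi> i. 1)"

definition generator :: "real^'n^'n \<Rightarrow> bool" where
  "generator Q \<longleftrightarrow> (\<forall>i j. i \<noteq> j \<longrightarrow> Q $ i $ j \<ge> 0) \<and> (\<forall>i. (\<Sum>j\<in>UNIV. Q $ i $ j) = 0)"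

definition irreducible_gen :: "real^'n^'n \<Rightarrow> bool" where
  "irreducible_gen Q \<longleftrightarrow> (\<forall>i j. (i, j) \<in> {(a, b). a \<noteq> b \<and> Q $ a $ b > 0}\<^sup>*)"

definition devmat :: "real^'n^'n \<Rightarrow> real^'n \<Rightarrow> real^'n^'n" where
  "devmat Q p = integral {0..} (\<lambda>u::real. mexp (u *\<^sub>R Q) - (\<chi> i j. p $ j))"

definition is_MAP :: "real^'n^'n \<Rightarrow> real^'n^'n \<Rightarrow> bool" where
  "is_MAP C D \<longleftrightarrow> (\<forall>i j. D $ i $ j \<ge> 0) \<and> (\<forall>i j. i \<noteq> j \<longrightarrow> C $ i $ j \<ge> 0)
     \<and> generator (C + D) \<and> irreducible_gen (C + D) \<and> invertible C"

definition diagonal_mat :: "real^'n^'n \<Rightarrow> bool" where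
  "diagonal_mat A \<longleftrightarrow> (\<forall>i j. i \<noteq> j \<longrightarrow> A $ i $ j = 0)"

end

(* The deviation matrix M of Q satisfies pi M = 0, M 1 = 0 and Q M = 1 pi - I.  For an MMPP
   the quantity pi D M D 1 equals sum_i pi_i x_i (M x)_i with x = diag D; for an MSPP,
   pi (C + D) = 0 and (C + D) 1 = 0 turn it into the same form with x = diag C.  Putting
   y = M x gives Q y = (pi x) 1 - x and pi y = 0, so the form equals
   -sum_i pi_i (Q y)_i y_i = 1/2 sum_(i,j) pi_i Q_ij (y_i - y_j)^2, which is nonnegative
   because the stationary vector of an irreducible generator is nonnegative. *)

theory Submission
  imports Defs
begin

section \<open>Matrix exponential\<close>

lemma sums_vec:
  fixes f :: "nat \<Rightarrow> 'a::real_normed_vector ^ 'n"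
  assumes "\<And>i. (\<lambda>k. f k $ i) sums (s $ i)"
  shows "f sums s"
proof -
  have "(\<lambda>n. \<chi> i. \<Sum>k<n. f k $ i) \<longlonglongrightarrow> (\<chi> i. s $ i)"
    using assms unfolding sums_def by (intro tendsto_vec_lambda) auto
  moreover have "(\<lambda>n. \<chi> i. \<Sum>k<n. f k $ i) = (\<lambda>n. \<Sum>k<n. f k)"
    by (auto simp: vec_eq_iff)
  ultimately show ?thesis unfolding sums_def by simp
qed

lemma has_vector_derivative_vec:
  fixes f :: "real \<Rightarrow> 'a::real_normed_vector ^ 'n"
  assumes "\<And>i. ((\<lambda>t. f t $ i) has_vector_derivative f' $ i) (at x within S)"
  shows "(f has_vector_derivative f') (at x within S)"
proof -
  have "((\<lambda>y. (1 / norm (y - x)) *\<^sub>R (f y $ i - (f x $ i + (y - x) *\<^sub>R f' $ i))) \<longlongrightarrow> 0)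
      (at x within S)" for i
    using assms[of i] unfolding has_vector_derivative_def has_derivative_within by blast
  then have "((\<lambda>y. \<chi> i. (1 / norm (y - x)) *\<^sub>R (f y $ i - (f x $ i + (y - x) *\<^sub>R f' $ i)))
      \<longlongrightarrow> (\<chi> i. 0)) (at x within S)"
    by (intro tendsto_vec_lambda) simp
  moreover have "(\<lambda>y. \<chi> i. (1 / norm (y - x)) *\<^sub>R (f y $ i - (f x $ i + (y - x) *\<^sub>R f' $ i)))
      = (\<lambda>y. (1 / norm (y - x)) *\<^sub>R (f y - (f x + (y - x) *\<^sub>R f')))"
    by (auto simp: vec_eq_iff)
  ultimately show ?thesis
    unfolding has_vector_derivative_def has_derivative_within
    by (auto simp: bounded_linear_scaleR_left zero_vec_def)
qed

lemma bounded_linear_vector_matrix_mult: "bounded_linear (\<lambda>X::real^'m^'n. p v* X)"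
  by (rule bounded_linearI')
    (auto simp: vec_eq_iff vector_matrix_mult_def sum.distrib sum_distrib_left algebra_simps)

lemma bounded_linear_matrix_vector_mult_left: "bounded_linear (\<lambda>X::real^'m^'n. X *v y)"
  by (rule bounded_linearI')
    (auto simp: vec_eq_iff matrix_vector_mult_def sum.distrib sum_distrib_left algebra_simps)

lemma bounded_linear_matrix_matrix_mult_right: "bounded_linear (\<lambda>X::real^'m^'n. A ** X)"
  by (rule bounded_linearI')
    (auto simp: vec_eq_iff matrix_matrix_mult_def sum.distrib sum_distrib_left algebra_simps)

lemma mpow_scaleR: "mpow (u *\<^sub>R A) k = (u ^ k) *\<^sub>R mpow A k"
  by (induction k) (auto simp: scalar_matrix_assoc matrix_scalar_ac mult.commute)

lemma mpow_Suc_right: "mpow A (Suc k) = mpow A k ** A"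
  by (induction k) (auto simp: matrix_mul_assoc)

definition abs_entry_sum :: "real^'n^'n \<Rightarrow> real" where
  "abs_entry_sum A = (\<Sum>i\<in>UNIV. \<Sum>j\<in>UNIV. \<bar>A $ i $ j\<bar>)"

lemma abs_mpow_entry_le: "\<bar>mpow A k $ i $ j\<bar> \<le> abs_entry_sum A ^ k"
proof (induction k arbitrary: i j)
  case 0
  then show ?case by (auto simp: mat_def)
next
  case (Suc k)
  have row: "(\<Sum>l\<in>UNIV. \<bar>A $ i $ l\<bar>) \<le> abs_entry_sum A"
    unfolding abs_entry_sum_def
    by (rule member_le_sum[where f="\<lambda>i. \<Sum>j\<in>UNIV. \<bar>A $ i $ j\<bar>"]) (auto intro: sum_nonneg)
  have "\<bar>mpow A (Suc k) $ i $ j\<bar> = \<bar>\<Sum>l\<in>UNIV. A $ i $ l * mpow A k $ l $ j\<bar>"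
    by (simp add: matrix_matrix_mult_def)
  also have "\<dots> \<le> (\<Sum>l\<in>UNIV. \<bar>A $ i $ l\<bar>) * abs_entry_sum A ^ k"
    by (rule order_trans[OF sum_abs])
      (auto intro!: sum_mono mult_left_mono simp: abs_mult Suc sum_distrib_right)
  also have "\<dots> \<le> abs_entry_sum A ^ Suc k"
    using row by (simp add: mult_right_mono abs_entry_sum_def sum_nonneg)
  finally show ?case .
qed

definition mexp_coeff :: "real^'n^'n \<Rightarrow> 'n \<Rightarrow> 'n \<Rightarrow> nat \<Rightarrow> real" where
  "mexp_coeff A i j k = mpow A k $ i $ j / fact k"

lemma summable_mexp_coeff: "summable (\<lambda>k. mexp_coeff A i j k * y ^ k)"
proof (rule summable_comparison_test'[where N=0, OF summable_exp_generic])
  fix k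
  have "norm (mexp_coeff A i j k * y ^ k) = \<bar>mpow A k $ i $ j\<bar> * \<bar>y\<bar> ^ k / fact k"
    by (simp add: mexp_coeff_def abs_mult power_abs)
  also have "\<dots> \<le> abs_entry_sum A ^ k * \<bar>y\<bar> ^ k / fact k"
    by (intro divide_right_mono mult_right_mono abs_mpow_entry_le) auto
  finally show "norm (mexp_coeff A i j k * y ^ k) \<le> (abs_entry_sum A * \<bar>y\<bar>) ^ k /\<^sub>R fact k"
    by (simp add: power_mult_distrib divide_inverse mult.commute)
qed

lemma mexp_series_sums: "(\<lambda>k. (1 / fact k) *\<^sub>R mpow A k) sums (\<chi> i j. \<Sum>k. mexp_coeff A i j k)"
proof (intro sums_vec)
  fix i j
  show "(\<lambda>k. ((1 / fact k) *\<^sub>R mpow A k) $ i $ j) sums ((\<chi> i j. \<Sum>k. mexp_coeff A i j k) $ i $ j)"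
    using summable_mexp_coeff[of A i j 1] by (simp add: mexp_coeff_def summable_sums)
qed

lemma mexp_sums: "(\<lambda>k. (1 / fact k) *\<^sub>R mpow A k) sums mexp A"
  unfolding mexp_def by (rule summable_sums[OF sums_summable[OF mexp_series_sums]])

lemma mexp_scaleR_entry:
  fixes A :: "real^'n^'n"
  shows "mexp (u *\<^sub>R A) $ i $ j = (\<Sum>k. mexp_coeff A i j k * u ^ k)"
proof -
  have "mexp B $ i $ j = (\<Sum>k. mexp_coeff B i j k)" for B :: "real^'n^'n"
    using sums_unique2[OF mexp_series_sums[of B] mexp_sums[of B]] by (metis vec_lambda_beta)
  then show ?thesis
    by (simp add: mexp_coeff_def mpow_scaleR mult.commute)
qed

lemma diffs_mexp_coeff: "diffs (mexp_coeff A i j) k = (\<Sum>l\<in>UNIV. A $ i $ l * mexp_coeff A l j k)"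
proof -
  have "diffs (mexp_coeff A i j) k = mpow A (Suc k) $ i $ j / fact k"
    by (simp only: diffs_def mexp_coeff_def fact_Suc of_nat_fact)
      (simp add: divide_simps del: mpow.simps)
  then show ?thesis
    by (simp add: matrix_matrix_mult_def mexp_coeff_def sum_divide_distrib)
qed

lemma has_vector_derivative_mexp:
  "((\<lambda>t. mexp (t *\<^sub>R A)) has_vector_derivative (A ** mexp (u *\<^sub>R A))) (at u within S)"
proof (intro has_vector_derivative_vec)
  fix i j
  have "((\<lambda>t. \<Sum>k. mexp_coeff A i j k * t ^ k) has_field_derivative
      (\<Sum>k. diffs (mexp_coeff A i j) k * u ^ k)) (at u)"
    by (rule termdiffs_strong_converges_everywhere) (rule summable_mexp_coeff)
  moreover have "(\<Sum>k. diffs (mexp_coeff A i j) k * u ^ k) = (A ** mexp (u *\<^sub>R A)) $ i $ j"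
  proof -
    have "(\<Sum>k. diffs (mexp_coeff A i j) k * u ^ k)
        = (\<Sum>k. \<Sum>l\<in>UNIV. A $ i $ l * (mexp_coeff A l j k * u ^ k))"
      by (simp add: diffs_mexp_coeff sum_distrib_right mult.assoc)
    also have "\<dots> = (\<Sum>l\<in>UNIV. \<Sum>k. A $ i $ l * (mexp_coeff A l j k * u ^ k))"
      by (rule suminf_sum) (intro summable_mult summable_mexp_coeff)
    also have "\<dots> = (A ** mexp (u *\<^sub>R A)) $ i $ j"
      by (simp add: matrix_matrix_mult_def mexp_scaleR_entry suminf_mult summable_mexp_coeff)
    finally show ?thesis .
  qed
  ultimately show "((\<lambda>t. mexp (t *\<^sub>R A) $ i $ j) has_vector_derivative
      (A ** mexp (u *\<^sub>R A)) $ i $ j) (at u within S)"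
    unfolding mexp_scaleR_entry[symmetric]
    by (simp add: has_real_derivative_iff_has_vector_derivative[symmetric]
        has_field_derivative_at_within)
qed

lemma mexp_eq_if_mpow_vanishes:
  assumes g: "bounded_linear g" and vanish: "\<And>k. g (mpow A (Suc k)) = 0"
  shows "g (mexp A) = g (mat 1)"
proof -
  have "(\<lambda>k. g ((1 / fact k) *\<^sub>R mpow A k)) sums g (mexp A)"
    by (rule bounded_linear.sums[OF g mexp_sums])
  moreover have "(\<lambda>k. g ((1 / fact k) *\<^sub>R mpow A k)) = (\<lambda>k. if k = 0 then g (mat 1) else 0)"
  proof
    fix k
    show "g ((1 / fact k) *\<^sub>R mpow A k) = (if k = 0 then g (mat 1) else 0)"
      by (cases k) (simp_all add: linear_simps(5)[OF g] vanish del: mpow.simps(2))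
  qed
  ultimately show ?thesis
    using sums_single[of 0 "\<lambda>_. g (mat 1)"] sums_unique2 by auto
qed

lemma mexp_zero: "mexp (0 *\<^sub>R A) = mat 1"
  using mexp_eq_if_mpow_vanishes[OF bounded_linear_ident, of "0 *\<^sub>R A"]
  by (simp only: mpow_scaleR) simp

lemma vector_matrix_mult_mexp:
  assumes "p v* A = 0"
  shows "p v* mexp (u *\<^sub>R A) = p"
proof -
  have "p v* (u *\<^sub>R A) = 0"
    using assms by (simp add: vec_eq_iff vector_matrix_mult_def mult.left_commute
        flip: sum_distrib_left)
  then have "p v* mpow (u *\<^sub>R A) (Suc k) = 0" for k
    by (simp only: mpow.simps(2) vector_matrix_mul_assoc[symmetric])
      (simp add: vector_matrix_mult_def vec_eq_iff)
  then show ?thesis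
    using mexp_eq_if_mpow_vanishes[OF bounded_linear_vector_matrix_mult[of p], of "u *\<^sub>R A"]
    by simp
qed

lemma mexp_matrix_vector_mult:
  assumes "A *v y = 0"
  shows "mexp (u *\<^sub>R A) *v y = y"
proof -
  have "(u *\<^sub>R A) *v y = 0"
    using assms by (simp add: vec_eq_iff matrix_vector_mult_def mult.assoc
        flip: sum_distrib_left)
  then have "mpow (u *\<^sub>R A) (Suc k) *v y = 0" for k
    by (simp only: mpow_Suc_right matrix_vector_mul_assoc[symmetric])
      (simp add: matrix_vector_mult_def vec_eq_iff)
  then show ?thesis
    using mexp_eq_if_mpow_vanishes[OF bounded_linear_matrix_vector_mult_left[of y], of "u *\<^sub>R A"]
    by simp
qed

section \<open>Integrals over a half-line\<close>

lemma tendsto_integral_atLeastAtMost_at_top: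
  fixes f :: "real \<Rightarrow> 'a::banach"
  assumes "f integrable_on {a..}"
  shows "((\<lambda>T. integral {a..T} f) \<longlongrightarrow> integral {a..} f) at_top"
proof (rule tendstoI)
  fix e :: real
  assume "e > 0"
  then obtain B where "B > 0" and B: "\<And>c d. ball 0 B \<subseteq> cbox c d \<Longrightarrow>
      \<exists>z. ((\<lambda>x. if x \<in> {a..} then f x else 0) has_integral z) (cbox c d) \<and>
        norm (z - integral {a..} f) < e"
    using has_integral'[THEN iffD1, OF integrable_integral[OF assms]] by blast
  have "dist (integral {a..T} f) (integral {a..} f) < e" if "T \<ge> max B \<bar>a\<bar>" for T
  proof -
    have "ball 0 B \<subseteq> cbox (-T) T"
      using that by (auto simp: ball_eq_greaterThanLessThan cbox_interval)
    then obtain z where z: "((\<lambda>x. if x \<in> {a..} then f x else 0) has_integral z) (cbox (-T) T)"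
      and close: "norm (z - integral {a..} f) < e"
      using B by blast
    have "{a..} \<inter> cbox (-T) T = {a..T}"
      using that by (auto simp: cbox_interval)
    then have "(f has_integral z) {a..T}"
      using z by (simp only: has_integral_restrict_Int)
    then show ?thesis
      using close by (simp add: integral_unique dist_norm)
  qed
  then show "\<forall>\<^sub>F T in at_top. dist (integral {a..T} f) (integral {a..} f) < e"
    unfolding eventually_at_top_linorder by blast
qed

text \<open>The integrals over the windows [T, T+1] tend to L, and, as differences of convergent
  partial integrals, also to zero.\<close>
lemma tendsto_at_top_zero_if_integrable_on_atLeast:
  fixes f :: "real \<Rightarrow> 'a::banach"
  assumes int: "f integrable_on {a..}" and lim: "(f \<longlongrightarrow> L) at_top"
  shows "L = 0"
proof -
  define G where "G T = integral {a..T} f" for T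
  have window: "integral {T..T+1} f = G (T + 1) - G T" if "T \<ge> a" for T
    using Henstock_Kurzweil_Integration.integral_combine[of a T "T + 1" f]
      integrable_on_subinterval[OF int, of a "T + 1"] that
    by (simp add: G_def eq_diff_eq add.commute)
  have G_lim: "(G \<longlongrightarrow> integral {a..} f) at_top"
    unfolding G_def by (rule tendsto_integral_atLeastAtMost_at_top[OF int])
  have "((\<lambda>T. G (T + 1)) \<longlongrightarrow> integral {a..} f) at_top"
    by (rule filterlim_compose[OF G_lim filterlim_at_top_mono[OF filterlim_ident]]) simp
  from tendsto_diff[OF this G_lim]
  have "((\<lambda>T. G (T + 1) - G T) \<longlongrightarrow> 0) at_top"
    by simp
  moreover have "\<forall>\<^sub>F T in at_top. G (T + 1) - G T = integral {T..T+1} f"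
    using eventually_ge_at_top[of a] by eventually_elim (simp add: window)
  ultimately have to_zero: "((\<lambda>T. integral {T..T+1} f) \<longlongrightarrow> 0) at_top"
    by (rule Lim_transform_eventually)
  have to_L: "((\<lambda>T. integral {T..T+1} f) \<longlongrightarrow> L) at_top"
  proof (rule tendstoI)
    fix e :: real
    assume "e > 0"
    then obtain N where N: "\<And>s. s \<ge> N \<Longrightarrow> dist (f s) L < e / 2"
      using lim[THEN tendstoD, of "e / 2"] by (auto simp: eventually_at_top_linorder)
    have "dist (integral {T..T+1} f) L < e" if "T \<ge> max N a" for T
    proof -
      have window_int: "((\<lambda>s. f s - L) has_integral (integral {T..T+1} f - L)) (cbox T (T + 1))"
        using has_integral_diff[OF integrable_integral has_integral_const_real[of L T "T + 1"]]
          integrable_on_subinterval[OF int, of T "T + 1"] that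
        by (simp add: cbox_interval)
      have "norm (integral {T..T+1} f - L) \<le> e / 2 * Henstock_Kurzweil_Integration.content (cbox T (T + 1))"
        by (rule has_integral_bound[OF _ window_int])
          (use N that \<open>e > 0\<close> in \<open>auto simp: dist_norm cbox_interval less_imp_le\<close>)
      then show ?thesis
        using \<open>e > 0\<close> by (simp add: dist_norm cbox_interval)
    qed
    then show "\<forall>\<^sub>F T in at_top. dist (integral {T..T+1} f) L < e"
      unfolding eventually_at_top_linorder by blast
  qed
  show ?thesis
    using tendsto_unique[OF trivial_limit_at_top_linorder to_L to_zero] .
qed

section \<open>The deviation matrix\<close>

lemma vector_matrix_mult_rank_one:
  assumes "p \<bullet> ones = 1"
  shows "p v* (\<chi> i. p) = p"
  using assms by (simp add: vec_eq_iff vector_matrix_mult_def inner_vec_def ones_def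
      mult.commute flip: sum_distrib_left)

lemma rank_one_matrix_vector_mult: "(\<chi> i. p) *v z = (p \<bullet> z) *\<^sub>R ones"
  by (simp add: vec_eq_iff matrix_vector_mult_def inner_vec_def ones_def mult.commute)

lemma matrix_mult_rank_one:
  assumes "Q *v ones = 0"
  shows "Q ** (\<chi> i. p) = 0"
proof -
  have "(Q ** (\<chi> i. p)) $ i $ j = (Q *v ones) $ i * p $ j" for i j
    by (simp add: matrix_matrix_mult_def matrix_vector_mult_def ones_def sum_distrib_right)
  then show ?thesis
    using assms by (simp add: vec_eq_iff)
qed

lemma vector_matrix_mult_devmat:
  assumes "p v* Q = 0" and "p \<bullet> ones = 1"
    and int: "(\<lambda>u. mexp (u *\<^sub>R Q) - (\<chi> i. p)) integrable_on {0..}"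
  shows "p v* devmat Q p = 0"
proof -
  have "p v* (mexp (u *\<^sub>R Q) - (\<chi> i. p)) = 0" for u
    using assms by (simp add: vector_matrix_mult_diff_rdistrib vector_matrix_mult_mexp
        vector_matrix_mult_rank_one)
  then show ?thesis
    using integral_linear[OF int bounded_linear_vector_matrix_mult[of p]]
    unfolding devmat_def by (simp add: o_def)
qed

lemma devmat_matrix_vector_mult_ones:
  assumes "Q *v ones = 0" and "p \<bullet> ones = 1"
    and int: "(\<lambda>u. mexp (u *\<^sub>R Q) - (\<chi> i. p)) integrable_on {0..}"
  shows "devmat Q p *v ones = 0"
proof -
  have "(mexp (u *\<^sub>R Q) - (\<chi> i. p)) *v ones = 0" for u
    using assms by (simp add: matrix_vector_mult_diff_rdistrib mexp_matrix_vector_mult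
        rank_one_matrix_vector_mult)
  then show ?thesis
    using integral_linear[OF int bounded_linear_matrix_vector_mult_left[of ones]]
    unfolding devmat_def by (simp add: o_def)
qed

text \<open>The partial integrals satisfy Q (int_0^T (e^(Qu) - 1 pi) du) = e^(QT) - I, so the
  integrand converges to Q (devmat Q p) + I - 1 pi, and that limit must vanish.\<close>
lemma matrix_mult_devmat:
  fixes Q :: "real^'n^'n"
  assumes "Q *v ones = 0"
    and int: "(\<lambda>u. mexp (u *\<^sub>R Q) - (\<chi> i. p)) integrable_on {0..}"
  shows "Q ** devmat Q p = (\<chi> i. p) - mat 1"
proof -
  define P :: "real^'n^'n" where "P = (\<chi> i. p)"
  define f where "f = (\<lambda>u. mexp (u *\<^sub>R Q) - P)"
  have f_int: "f integrable_on {0..}"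
    using int by (simp add: f_def P_def)
  have Q_f: "Q ** f u = Q ** mexp (u *\<^sub>R Q)" for u
    using linear_diff[OF bounded_linear.linear[OF bounded_linear_matrix_matrix_mult_right[of Q]],
        of "mexp (u *\<^sub>R Q)" P]
      matrix_mult_rank_one[OF assms(1), of p]
    by (simp add: f_def P_def)
  have partial: "Q ** integral {0..T} f = mexp (T *\<^sub>R Q) - mat 1" if "T \<ge> 0" for T
  proof -
    have "((\<lambda>u. Q ** mexp (u *\<^sub>R Q)) has_integral mexp (T *\<^sub>R Q) - mexp (0 *\<^sub>R Q)) {0..T}"
      by (rule fundamental_theorem_of_calculus) (use that has_vector_derivative_mexp in auto)
    then have "((\<lambda>u. Q ** f u) has_integral mexp (T *\<^sub>R Q) - mat 1) {0..T}"
      by (simp only: Q_f mexp_zero)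
    moreover have "((\<lambda>u. Q ** f u) has_integral Q ** integral {0..T} f) {0..T}"
      using has_integral_linear[OF integrable_integral[OF integrable_on_subinterval[OF f_int]]
          bounded_linear_matrix_matrix_mult_right[of Q], of 0 T]
      by (simp only: o_def) simp
    ultimately show ?thesis
      by (rule has_integral_unique[symmetric])
  qed
  have "integral {0..} f = devmat Q p"
    by (simp only: devmat_def f_def P_def vec_lambda_eta)
  then have "((\<lambda>T. Q ** integral {0..T} f) \<longlongrightarrow> Q ** devmat Q p) at_top"
    using bounded_linear.tendsto[OF bounded_linear_matrix_matrix_mult_right
        tendsto_integral_atLeastAtMost_at_top[OF f_int]]
    by simp
  then have "((\<lambda>T. Q ** integral {0..T} f + (mat 1 - P)) \<longlongrightarrow>
      Q ** devmat Q p + (mat 1 - P)) at_top"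
    by (intro tendsto_add tendsto_const)
  moreover have "\<forall>\<^sub>F T in at_top. Q ** integral {0..T} f + (mat 1 - P) = f T"
    using eventually_ge_at_top[of 0] by eventually_elim (simp add: partial, simp add: f_def)
  ultimately have "(f \<longlongrightarrow> Q ** devmat Q p + (mat 1 - P)) at_top"
    by (rule Lim_transform_eventually)
  then have "Q ** devmat Q p + (mat 1 - P) = 0"
    by (rule tendsto_at_top_zero_if_integrable_on_atLeast[OF f_int])
  then show ?thesis
    by (simp add: P_def algebra_simps eq_diff_eq)
qed

section \<open>Stationary vectors of generators\<close>

lemma generator_matrix_vector_mult_ones:
  assumes "generator Q"
  shows "Q *v ones = 0"
  using assms unfolding generator_def by (simp add: vec_eq_iff matrix_vector_mult_def ones_def)

lemma irreducible_gen_closed_set: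
  assumes irr: "irreducible_gen Q" and closed: "\<And>a b. a \<in> S \<Longrightarrow> Q $ a $ b > 0 \<Longrightarrow> b \<in> S"
    and "i \<in> S"
  shows "j \<in> S"
proof -
  have "(i, j) \<in> {(a, b). a \<noteq> b \<and> Q $ a $ b > 0}\<^sup>*"
    using irr unfolding irreducible_gen_def by blast
  then show ?thesis
    by (induction rule: rtrancl_induct) (use \<open>i \<in> S\<close> closed in auto)
qed

text \<open>Stationarity balances the probability flow into and out of N = {i. p i < 0};
  all flows out of N are nonpositive, so each vanishes.\<close>
lemma stationary_negative_part_closed:
  assumes gen: "generator Q" and pQ: "p v* Q = 0"
    and a: "p $ a < 0" and ab: "Q $ a $ b > 0"
  shows "p $ b < 0"
proof (rule ccontr)
  assume b: "\<not> p $ b < 0"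
  define N where "N = {i. p $ i < 0}"
  define t where "t i = p $ i * (\<Sum>j\<in>N. Q $ i $ j)" for i
  have offdiag: "i \<noteq> j \<Longrightarrow> Q $ i $ j \<ge> 0" for i j
    using gen unfolding generator_def by blast
  have outflow: "(\<Sum>j\<in>N. Q $ i $ j) = - (\<Sum>j\<in>UNIV - N. Q $ i $ j)" for i
    using sum.subset_diff[of N UNIV "\<lambda>j. Q $ i $ j"] gen by (simp add: generator_def)
  have "(\<Sum>i\<in>UNIV. t i) = (\<Sum>j\<in>N. \<Sum>i\<in>UNIV. Q $ i $ j * p $ i)"
    unfolding t_def by (subst sum.swap) (simp add: sum_distrib_left mult.commute)
  also have "\<dots> = (\<Sum>j\<in>N. (p v* Q) $ j)"
    by (simp add: vector_matrix_mult_def mult.commute)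
  finally have t_sum: "(\<Sum>i\<in>UNIV. t i) = 0"
    using pQ by simp
  have t_nonneg: "t i \<ge> 0" for i
  proof (cases "i \<in> N")
    case True
    then have "(\<Sum>j\<in>UNIV - N. Q $ i $ j) \<ge> 0"
      by (intro sum_nonneg offdiag) auto
    then show ?thesis
      using True unfolding t_def outflow by (simp add: N_def mult_nonpos_nonneg)
  next
    case False
    then have "(\<Sum>j\<in>N. Q $ i $ j) \<ge> 0"
      by (intro sum_nonneg offdiag) auto
    then show ?thesis
      using False unfolding t_def by (simp add: N_def)
  qed
  have "t a = 0"
    using sum_nonneg_eq_0_iff[of UNIV t] t_sum t_nonneg by simp
  then have "(\<Sum>j\<in>UNIV - N. Q $ a $ j) = 0"
    using a unfolding t_def outflow by simp
  moreover have "a \<in> N" "b \<notin> N"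
    using a b by (auto simp: N_def)
  moreover have "\<forall>j\<in>UNIV - N. Q $ a $ j \<ge> 0"
    using \<open>a \<in> N\<close> by (metis Diff_iff offdiag)
  ultimately have "Q $ a $ b = 0"
    using sum_nonneg_eq_0_iff[of "UNIV - N" "\<lambda>j. Q $ a $ j"] by simp
  with ab show False
    by simp
qed

lemma stationary_nonneg:
  assumes gen: "generator Q" and irr: "irreducible_gen Q" and pQ: "p v* Q = 0"
    and p1: "p \<bullet> ones = 1"
  shows "p $ i \<ge> 0"
proof (rule ccontr)
  assume "\<not> p $ i \<ge> 0"
  moreover have "\<And>a b. a \<in> {j. p $ j < 0} \<Longrightarrow> Q $ a $ b > 0 \<Longrightarrow> b \<in> {j. p $ j < 0}"
    using stationary_negative_part_closed[OF gen pQ] by simp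
  ultimately have "p $ j < 0" for j
    using irreducible_gen_closed_set[OF irr, of "{j. p $ j < 0}" i j] by simp
  then have "(\<Sum>j\<in>UNIV. - p $ j) > 0"
    by (intro sum_pos) auto
  then have "(\<Sum>j\<in>UNIV. p $ j) < 0"
    by (simp add: sum_negf)
  moreover have "(\<Sum>j\<in>UNIV. p $ j) = 1"
    using p1 by (simp add: inner_vec_def ones_def)
  ultimately show False
    by simp
qed

lemma stationary_dirichlet_form:
  assumes Q1: "Q *v ones = 0" and pQ: "p v* Q = 0"
  shows "(\<Sum>i\<in>UNIV. \<Sum>j\<in>UNIV. p $ i * Q $ i $ j * (y $ i - y $ j)\<^sup>2)
    = - 2 * (\<Sum>i\<in>UNIV. p $ i * (Q *v y) $ i * y $ i)"
proof -
  have rows: "(\<Sum>j\<in>UNIV. Q $ i $ j) = 0" for i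
    using Q1 by (simp add: vec_eq_iff matrix_vector_mult_def ones_def)
  have cols: "(\<Sum>i\<in>UNIV. Q $ i $ j * p $ i) = 0" for j
    using pQ by (simp add: vec_eq_iff vector_matrix_mult_def mult.commute)
  have left: "(\<Sum>i\<in>UNIV. \<Sum>j\<in>UNIV. p $ i * Q $ i $ j * (y $ i)\<^sup>2) = 0"
    by (simp add: rows mult.commute mult.left_commute flip: sum_distrib_left sum_distrib_right)
  have "(\<Sum>i\<in>UNIV. \<Sum>j\<in>UNIV. p $ i * Q $ i $ j * (y $ j)\<^sup>2)
      = (\<Sum>j\<in>UNIV. (y $ j)\<^sup>2 * (\<Sum>i\<in>UNIV. Q $ i $ j * p $ i))"
    by (subst sum.swap) (simp add: sum_distrib_left mult_ac)
  then have right: "(\<Sum>i\<in>UNIV. \<Sum>j\<in>UNIV. p $ i * Q $ i $ j * (y $ j)\<^sup>2) = 0"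
    by (simp add: cols)
  have "(\<Sum>i\<in>UNIV. \<Sum>j\<in>UNIV. p $ i * Q $ i $ j * (y $ i - y $ j)\<^sup>2)
      = (\<Sum>i\<in>UNIV. \<Sum>j\<in>UNIV. p $ i * Q $ i $ j * (y $ i)\<^sup>2)
        - 2 * (\<Sum>i\<in>UNIV. \<Sum>j\<in>UNIV. p $ i * Q $ i $ j * y $ i * y $ j)
        + (\<Sum>i\<in>UNIV. \<Sum>j\<in>UNIV. p $ i * Q $ i $ j * (y $ j)\<^sup>2)"
    by (simp add: power2_diff sum.distrib sum_subtractf sum_distrib_left algebra_simps)
  also have "\<dots> = - 2 * (\<Sum>i\<in>UNIV. \<Sum>j\<in>UNIV. p $ i * Q $ i $ j * y $ i * y $ j)"
    by (simp only: left right)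
  also have "\<dots> = - 2 * (\<Sum>i\<in>UNIV. p $ i * (Q *v y) $ i * y $ i)"
    by (simp add: matrix_vector_mult_def sum_distrib_left sum_distrib_right mult_ac)
  finally show ?thesis .
qed

lemma stationary_quadratic_form_nonpos:
  assumes gen: "generator Q" and p_nonneg: "\<And>i. p $ i \<ge> 0" and pQ: "p v* Q = 0"
  shows "(\<Sum>i\<in>UNIV. p $ i * (Q *v y) $ i * y $ i) \<le> 0"
proof -
  have "0 \<le> p $ i * Q $ i $ j * (y $ i - y $ j)\<^sup>2" for i j
    using gen p_nonneg[of i] by (cases "i = j") (auto simp: generator_def)
  then have "0 \<le> (\<Sum>i\<in>UNIV. \<Sum>j\<in>UNIV. p $ i * Q $ i $ j * (y $ i - y $ j)\<^sup>2)"
    by (intro sum_nonneg)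
  then show ?thesis
    unfolding stationary_dirichlet_form[OF generator_matrix_vector_mult_ones[OF gen] pQ]
    by simp
qed

lemma deviation_weighted_form_nonneg:
  assumes gen: "generator Q" and p_nonneg: "\<And>i. p $ i \<ge> 0" and pQ: "p v* Q = 0"
    and p1: "p \<bullet> ones = 1" and pM: "p v* M = 0" and M1: "M *v ones = 0"
    and QM: "Q ** M = (\<chi> i. p) - mat 1"
  shows "(\<Sum>i\<in>UNIV. p $ i * x $ i * (M *v x) $ i) \<ge> 0"
proof -
  define y where "y = M *v x"
  define c where "c = p \<bullet> x"
  have "Q *v y = (Q ** M) *v (x - c *\<^sub>R ones)"
    using M1 by (simp add: y_def matrix_vector_mul_assoc[symmetric] algebra_simps)
  also have "\<dots> = (p \<bullet> (x - c *\<^sub>R ones)) *\<^sub>R ones - (x - c *\<^sub>R ones)"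
    unfolding QM by (simp add: matrix_vector_mult_diff_rdistrib rank_one_matrix_vector_mult)
  finally have Qy: "Q *v y = c *\<^sub>R ones - x"
    using p1 by (simp add: c_def inner_diff_right)
  have "(\<Sum>i\<in>UNIV. p $ i * y $ i) = p \<bullet> (M *v x)"
    by (simp add: y_def inner_vec_def)
  also have "\<dots> = (p v* M) \<bullet> x"
    by (rule dot_lmul_matrix[symmetric])
  finally have py: "(\<Sum>i\<in>UNIV. p $ i * y $ i) = 0"
    using pM by simp
  have "(\<Sum>i\<in>UNIV. p $ i * x $ i * y $ i)
      = c * (\<Sum>i\<in>UNIV. p $ i * y $ i) - (\<Sum>i\<in>UNIV. p $ i * (Q *v y) $ i * y $ i)"
    by (simp add: Qy ones_def algebra_simps sum_subtractf sum_distrib_left)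
  also have "\<dots> \<ge> 0"
    using stationary_quadratic_form_nonpos[OF gen p_nonneg pQ, of y] py by simp
  finally show ?thesis
    by (simp add: y_def)
qed

section \<open>MMPPs and MSPPs\<close>

lemma diagonal_vector_matrix_mult:
  assumes "diagonal_mat A"
  shows "p v* A = (\<chi> j. p $ j * A $ j $ j)"
proof -
  have "(\<Sum>i\<in>UNIV. p $ i * A $ i $ j) = (\<Sum>i\<in>UNIV. if i = j then p $ j * A $ j $ j else 0)" for j
    using assms by (intro sum.cong) (auto simp: diagonal_mat_def)
  then show ?thesis
    by (simp add: vec_eq_iff vector_matrix_mult_def)
qed

lemma diagonal_matrix_vector_mult_ones:
  assumes "diagonal_mat A"
  shows "A *v ones = (\<chi> i. A $ i $ i)"
proof -
  have "(\<Sum>j\<in>UNIV. A $ i $ j * ones $ j) = (\<Sum>j\<in>UNIV. if j = i then A $ i $ i else 0)" for i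
    using assms by (intro sum.cong) (auto simp: diagonal_mat_def ones_def)
  then show ?thesis
    by (simp add: vec_eq_iff matrix_vector_mult_def)
qed

lemma diagonal_MAP_weighted_form:
  assumes diag: "diagonal_mat D \<or> diagonal_mat C"
    and pQ: "p v* (C + D) = 0" and Q1: "(C + D) *v ones = 0"
  obtains x where "(p v* (D ** M ** D)) \<bullet> ones = (\<Sum>i\<in>UNIV. p $ i * x $ i * (M *v x) $ i)"
proof -
  have form: "(p v* (D ** M ** D)) \<bullet> ones = (p v* D) \<bullet> (M *v (D *v ones))"
    by (simp add: vector_matrix_mul_assoc[symmetric] dot_lmul_matrix)
  from diag show thesis
  proof
    assume "diagonal_mat D"
    then show thesis
      using form that[of "\<chi> i. D $ i $ i"]
      by (simp add: diagonal_vector_matrix_mult diagonal_matrix_vector_mult_ones inner_vec_def)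
  next
    assume C: "diagonal_mat C"
    define c where "c = (\<chi> i. C $ i $ i)"
    have D1: "D *v ones = - c"
      using Q1 diagonal_matrix_vector_mult_ones[OF C]
      by (simp add: c_def matrix_vector_mult_add_rdistrib eq_neg_iff_add_eq_0 add.commute)
    have pD: "p v* D = - (\<chi> j. p $ j * c $ j)"
      using pQ diagonal_vector_matrix_mult[OF C]
      by (simp add: c_def vector_matrix_mult_add_rdistrib eq_neg_iff_add_eq_0 add.commute)
    have "M *v (- c) = - (M *v c)"
      by (simp add: vec_eq_iff matrix_vector_mult_def sum_negf)
    then show thesis
      using form that[of c] by (simp add: pD D1 inner_vec_def)
  qed
qed

theorem proposition1:
  fixes C D :: "real^'n^'n" and pi :: "real^'n"
  assumes "is_MAP C D"
    and "diagonal_mat D \<or> diagonal_mat C"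
    and "pi v* (C + D) = 0"
    and "pi \<bullet> ones = 1"
  shows "(pi v* (D ** devmat (C + D) pi ** D)) \<bullet> ones \<ge> 0"
proof -
  define Q where "Q = C + D"
  have gen: "generator Q" and irr: "irreducible_gen Q"
    using assms(1) unfolding is_MAP_def Q_def by auto
  have pQ: "pi v* Q = 0" and p1: "pi \<bullet> ones = 1"
    using assms(3,4) by (simp_all add: Q_def)
  have Q1: "Q *v ones = 0"
    by (rule generator_matrix_vector_mult_ones[OF gen])
  show ?thesis
  proof (cases "(\<lambda>u. mexp (u *\<^sub>R Q) - (\<chi> i. pi)) integrable_on {0..}")
    case int: True
    obtain x where "(pi v* (D ** devmat Q pi ** D)) \<bullet> ones
        = (\<Sum>i\<in>UNIV. pi $ i * x $ i * (devmat Q pi *v x) $ i)"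
      using diagonal_MAP_weighted_form[OF assms(2,3)] Q1 unfolding Q_def by blast
    also have "\<dots> \<ge> 0"
      by (rule deviation_weighted_form_nonneg[OF gen stationary_nonneg[OF gen irr pQ p1] pQ p1
            vector_matrix_mult_devmat[OF pQ p1 int] devmat_matrix_vector_mult_ones[OF Q1 p1 int]
            matrix_mult_devmat[OF Q1 int]])
    finally show ?thesis
      by (simp add: Q_def)
  next
    case False
    \<comment> \<open>the improper integral diverges, so devmat is the junk value 0\<close>
    then have "devmat Q pi = 0"
      by (simp add: devmat_def not_integrable_integral)
    then show ?thesis
      by (simp add: Q_def vector_matrix_mult_def flip: zero_vec_def)
  qed
qed

end
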